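(* Let $x$ and $y$ be two distinct vertices of a graph $G$. Then there exists an $x$–$y$ grain line in $G$ if and only if $G$ contains infinitely many pairwise edge-disjoint $x$–$y$ paths.
   Context: Graphs are simple and may be infinite; $\mathbb{N}=\{0,1,2,\dots\}$. An $x$–$y$ path $P$ induces a linear order $\le_P$ on $V(P)$ (the order of traversal from $x$ to $y$). For distinct vertices $x,y$ of $G$, an $x$–$y$ grain line in $G$ is a pair $(L,\mathcal P)$ where $L\subseteq V(G)$ is a countable set with a linear order $\le_L$ having least element $x$ and greatest element $y$, and $\mathcal P=(P_n)_{n\in\mathbb{N}}$ is a sequence of pairwise edge-disjoint $x$–$y$ paths in $G$, such that: (GL1) $L$ is exactly the set of vertices $v$ for which $\{n\in\mathbb{N}: v\in V(P_n)\}$ is a non-empty final segment $\{n: n\ge m\}$ of $\mathbb{N}$; (GL2) if a vertex of $P_n$ is not in $L$, then it is not a vertex of any $P_m$ with $m\neq n$; (GL3) for every $n\in\mathbb{N}$, the orders $\le_{P_n}$ and $\le_L$ induce the same linear order on $L_{<n}:=L\cap\bigcup_{k<n}V(P_k)$. *)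

theory Defs
  imports Main "HOL-Library.Countable_Set"
begin

definition simple_graph :: "'a set \<Rightarrow> ('a \<Rightarrow> 'a \<Rightarrow> bool) \<Rightarrow> bool" where
  "simple_graph V E \<longleftrightarrow>
     (\<forall>u v. E u v \<longrightarrow> u \<in> V \<and> v \<in> V) \<and>
     (\<forall>u v. E u v \<longrightarrow> E v u) \<and> (\<forall>v. \<not> E v v)"

definition is_path :: "'a set \<Rightarrow> ('a \<Rightarrow> 'a \<Rightarrow> bool) \<Rightarrow> 'a \<Rightarrow> 'a \<Rightarrow> 'a list \<Rightarrow> bool" where
  "is_path V E x y p \<longleftrightarrow>
     p \<noteq> [] \<and> hd p = x \<and> last p = y \<and> distinct p \<and> set p \<subseteq> V \<and>
     (\<forall>i. Suc i < length p \<longrightarrow> E (p ! i) (p ! Suc i))"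

definition path_edges :: "'a list \<Rightarrow> 'a set set" where
  "path_edges p = {{p ! i, p ! Suc i} | i. Suc i < length p}"

definition edge_disjoint :: "'a list \<Rightarrow> 'a list \<Rightarrow> bool" where
  "edge_disjoint p q \<longleftrightarrow> path_edges p \<inter> path_edges q = {}"

definition path_le :: "'a list \<Rightarrow> 'a \<Rightarrow> 'a \<Rightarrow> bool" where
  "path_le p u w \<longleftrightarrow> (\<exists>i j. i \<le> j \<and> j < length p \<and> p ! i = u \<and> p ! j = w)"

definition grain_line ::
  "'a set \<Rightarrow> ('a \<Rightarrow> 'a \<Rightarrow> bool) \<Rightarrow> 'a \<Rightarrow> 'a \<Rightarrow> 'a set \<Rightarrow> ('a \<times> 'a) set \<Rightarrow> (nat \<Rightarrow> 'a list) \<Rightarrow> bool" where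
  "grain_line V E x y L R P \<longleftrightarrow>
     L \<subseteq> V \<and> countable L \<and> linear_order_on L R \<and>
     x \<in> L \<and> (\<forall>v\<in>L. (x, v) \<in> R) \<and> y \<in> L \<and> (\<forall>v\<in>L. (v, y) \<in> R) \<and>
     (\<forall>n. is_path V E x y (P n)) \<and>
     (\<forall>n m. n \<noteq> m \<longrightarrow> edge_disjoint (P n) (P m)) \<and>
     \<comment> \<open>GL1\<close>
     L = {v. \<exists>m. {n. v \<in> set (P n)} = {m..}} \<and>
     \<comment> \<open>GL2\<close>
     (\<forall>n v. v \<in> set (P n) \<and> v \<notin> L \<longrightarrow> (\<forall>m. m \<noteq> n \<longrightarrow> v \<notin> set (P m))) \<and>
     \<comment> \<open>GL3\<close>
     (\<forall>n. \<forall>u \<in> L \<inter> (\<Union>k<n. set (P k)). \<forall>w \<in> L \<inter> (\<Union>k<n. set (P k)).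
         path_le (P n) u w \<longleftrightarrow> (u, w) \<in> R)"

end

theory Submission
  imports Defs
begin

(*
  From infinitely many edge-disjoint x-y paths a diagonal pigeonhole argument extracts a
  sequence P 0, P 1, ... in which, for every j, all later paths P n (n > j) have the same trace
  on P j: they meet P j in the same vertices and traverse them in the same order. This is
  possible because a path has only finitely many possible traces on the finite path P j.
  Consequently every vertex of P j lies either on all or on none of the later paths, so a vertex
  shared by two paths lies on a final segment of the sequence. These vertices form L, ordered
  as the later paths traverse them. Conversely, the paths of a grain line are pairwise distinct,
  being edge-disjoint with at least one edge each (x \<noteq> y), so they form an infinite set.
*)

lemma path_le_refl: "v \<in> set p \<Longrightarrow> path_le p v v"
  by (auto simp: path_le_def in_set_conv_nth)

lemma path_le_antisym:
  assumes "distinct p" and "path_le p u w" and "path_le p w u" shows "u = w"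
proof -
  obtain i j where "i \<le> j" "j < length p" "p ! i = u" "p ! j = w"
    using assms(2) unfolding path_le_def by blast
  moreover obtain i' j' where "i' \<le> j'" "j' < length p" "p ! i' = w" "p ! j' = u"
    using assms(3) unfolding path_le_def by blast
  ultimately show ?thesis
    using nth_eq_iff_index_eq[OF assms(1), of i j'] nth_eq_iff_index_eq[OF assms(1), of j i'] by auto
qed

lemma path_le_trans:
  assumes "distinct p" and "path_le p u v" and "path_le p v w" shows "path_le p u w"
proof -
  obtain i j where ij: "i \<le> j" "j < length p" "p ! i = u" "p ! j = v"
    using assms(2) unfolding path_le_def by blast
  obtain i' j' where ij': "i' \<le> j'" "j' < length p" "p ! i' = v" "p ! j' = w"
    using assms(3) unfolding path_le_def by blast
  have "i \<le> j'"
    using nth_eq_iff_index_eq[OF assms(1), of j i'] ij ij' by auto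
  with ij ij' show ?thesis unfolding path_le_def by blast
qed

lemma path_le_total:
  assumes "u \<in> set p" and "w \<in> set p" shows "path_le p u w \<or> path_le p w u"
proof -
  obtain i j where "i < length p" "p ! i = u" "j < length p" "p ! j = w"
    using assms by (auto simp: in_set_conv_nth)
  moreover have "i \<le> j \<or> j \<le> i" by linarith
  ultimately show ?thesis unfolding path_le_def by blast
qed

lemma path_le_hd: "v \<in> set p \<Longrightarrow> path_le p (hd p) v"
proof -
  assume "v \<in> set p"
  then obtain i where i: "i < length p" "p ! i = v" by (auto simp: in_set_conv_nth)
  show ?thesis
    unfolding path_le_def
  proof (intro exI conjI)
    show "0 \<le> i" "i < length p" "p ! i = v" using i by auto
    show "p ! 0 = hd p" using i by (cases p) auto
  qed
qed

lemma path_le_last: "v \<in> set p \<Longrightarrow> path_le p v (last p)"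
proof -
  assume "v \<in> set p"
  then obtain i where i: "i < length p" "p ! i = v" by (auto simp: in_set_conv_nth)
  then have "p \<noteq> []" by auto
  show ?thesis
    unfolding path_le_def
  proof (intro exI conjI)
    show "i \<le> length p - 1" "length p - 1 < length p" "p ! i = v" using i by auto
    show "p ! (length p - 1) = last p" using \<open>p \<noteq> []\<close> by (simp add: last_conv_nth)
  qed
qed

lemma path_edges_nonempty:
  assumes "is_path V E x y p" and "x \<noteq> y" shows "path_edges p \<noteq> {}"
proof -
  have "Suc 0 < length p"
    using assms unfolding is_path_def by (cases p rule: remdups_adj.cases) auto
  then show ?thesis unfolding path_edges_def by blast
qed

lemma inj_if_pairwise_edge_disjoint:
  assumes "\<And>n. path_edges (P n) \<noteq> {}" and "\<And>n m. n \<noteq> m \<Longrightarrow> edge_disjoint (P n) (P m)"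
  shows "inj P"
proof (rule injI, rule ccontr)
  fix n m assume "P n = P m" "n \<noteq> m"
  then have "path_edges (P n) = {}"
    using assms(2)[of n m] by (simp add: edge_disjoint_def)
  with assms(1) show False by blast
qed

lemma infinite_edge_disjoint_paths_if_grain_line:
  assumes "grain_line V E x y L R P" and "x \<noteq> y"
  shows "infinite (range P) \<and> (\<forall>p\<in>range P. is_path V E x y p) \<and>
    (\<forall>p\<in>range P. \<forall>q\<in>range P. p \<noteq> q \<longrightarrow> edge_disjoint p q)"
proof -
  have paths: "is_path V E x y (P n)" for n
    using assms(1) by (simp add: grain_line_def)
  have disjoint: "edge_disjoint (P n) (P m)" if "n \<noteq> m" for n m
    using assms(1) that by (simp add: grain_line_def)
  have "inj P"
    using path_edges_nonempty[OF paths \<open>x \<noteq> y\<close>] disjoint by (rule inj_if_pairwise_edge_disjoint)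
  then show ?thesis
    using paths by (auto simp: range_inj_infinite intro: disjoint)
qed

lemma stabilizing_sequence:
  fixes f :: "'b \<Rightarrow> 'b \<Rightarrow> 'c"
  assumes "infinite S" and finite_values: "\<And>p. finite (range (f p))"
  obtains P :: "nat \<Rightarrow> 'b" where "inj P" and "range P \<subseteq> S"
    and "\<And>j n n'. j < n \<Longrightarrow> j < n' \<Longrightarrow> f (P j) (P n) = f (P j) (P n')"
proof -
  have "\<exists>T'. T' \<subseteq> T - {p} \<and> infinite T' \<and> (\<exists>c. \<forall>q\<in>T'. f p q = c)"
    if "infinite T" for T :: "'b set" and p
  proof -
    have "finite (f p ` (T - {p}))"
      using finite_values by (rule finite_subset[rotated]) auto
    then obtain q0 where "infinite {q \<in> T - {p}. f p q = f p q0}"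
      using pigeonhole_infinite[of "T - {p}" "f p"] \<open>infinite T\<close> by auto
    then show ?thesis by (intro exI[of _ "{q \<in> T - {p}. f p q = f p q0}"]) auto
  qed
  then have "\<forall>T. \<exists>T'. infinite T \<longrightarrow>
      T' \<subseteq> T - {SOME p. p \<in> T} \<and> infinite T' \<and> (\<exists>c. \<forall>q\<in>T'. f (SOME p. p \<in> T) q = c)"
    by meson
  then obtain shrink where shrink: "\<And>T. infinite T \<Longrightarrow>
      shrink T \<subseteq> T - {SOME p. p \<in> T} \<and> infinite (shrink T) \<and>
      (\<exists>c. \<forall>q\<in>shrink T. f (SOME p. p \<in> T) q = c)"
    by (metis (no_types) choice)
  \<comment> \<open>P n is drawn from the infinite pool n; all later P m lie in pool (Suc n),
    on which f (P n) is constant.\<close>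
  define pool where "pool n = (shrink ^^ n) S" for n
  define P where "P n = (SOME p. p \<in> pool n)" for n
  have infinite_pool: "infinite (pool n)" for n
    by (induction n) (simp_all add: pool_def \<open>infinite S\<close> shrink)
  have P_in_pool: "P n \<in> pool n" for n
    unfolding P_def using infinite_pool[of n] by (metis ex_in_conv finite.emptyI someI_ex)
  have pool_Suc: "pool (Suc n) \<subseteq> pool n - {P n}" for n
    using shrink[OF infinite_pool[of n]] by (simp add: pool_def P_def)
  have P_in_later_pool: "P n \<in> pool m" if "m \<le> n" for m n
    using lift_Suc_antimono_le[of pool, OF _ that] pool_Suc P_in_pool by blast
  show thesis
  proof
    show "inj P"
    proof (rule linorder_injI)
      fix m n :: nat assume "m < n"
      then show "P m \<noteq> P n"
        using P_in_later_pool[of "Suc m" n] pool_Suc[of m] by auto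
    qed
    show "range P \<subseteq> S"
      using P_in_later_pool[of 0] by (auto simp: pool_def)
    fix j n n' :: nat assume "j < n" "j < n'"
    moreover obtain c where "\<forall>q\<in>pool (Suc j). f (P j) q = c"
      using shrink[OF infinite_pool[of j]] by (auto simp: pool_def P_def)
    ultimately show "f (P j) (P n) = f (P j) (P n')"
      using P_in_later_pool[of "Suc j"] by (metis Suc_leI)
  qed
qed

definition path_trace :: "'a list \<Rightarrow> 'a list \<Rightarrow> 'a set \<times> ('a \<times> 'a) set" where
  "path_trace p q = (set q \<inter> set p, {(u, w) \<in> set p \<times> set p. path_le q u w})"

lemma finite_range_path_trace: "finite (range (path_trace p))"
proof (rule finite_subset)
  show "range (path_trace p) \<subseteq> Pow (set p) \<times> Pow (set p \<times> set p)"
    by (auto simp: path_trace_def)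
qed simp

locale trace_stable_paths =
  fixes V :: "'a set" and E :: "'a \<Rightarrow> 'a \<Rightarrow> bool" and x y :: 'a and P :: "nat \<Rightarrow> 'a list"
  assumes paths: "is_path V E x y (P n)"
    and trace_stable: "j < n \<Longrightarrow> j < n' \<Longrightarrow> path_trace (P j) (P n) = path_trace (P j) (P n')"
begin

definition limit_vertices :: "'a set" where
  "limit_vertices = {v. \<exists>m. {n. v \<in> set (P n)} = {m..}}"

definition limit_order :: "('a \<times> 'a) set" where
  "limit_order =
    {(u, w) \<in> limit_vertices \<times> limit_vertices. \<forall>\<^sub>F n in sequentially. path_le (P n) u w}"

lemma distinct_path: "distinct (P n)"
  using paths unfolding is_path_def by blast

lemma first_in_path: "x \<in> set (P n)" and last_in_path: "y \<in> set (P n)"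
  using paths[of n] unfolding is_path_def by auto

lemma mem_stable:
  assumes "j < n" "j < n'" "v \<in> set (P j)" shows "v \<in> set (P n) \<longleftrightarrow> v \<in> set (P n')"
proof -
  have "set (P n) \<inter> set (P j) = set (P n') \<inter> set (P j)"
    using trace_stable[OF assms(1,2)] by (simp add: path_trace_def)
  with assms(3) show ?thesis by blast
qed

lemma path_le_stable:
  assumes "j < n" "j < n'" "u \<in> set (P j)" "w \<in> set (P j)"
  shows "path_le (P n) u w \<longleftrightarrow> path_le (P n') u w"
proof -
  have "{(u, w) \<in> set (P j) \<times> set (P j). path_le (P n) u w} =
        {(u, w) \<in> set (P j) \<times> set (P j). path_le (P n') u w}"
    using trace_stable[OF assms(1,2)] by (simp add: path_trace_def)
  with assms(3,4) show ?thesis by blast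
qed

lemma limit_vertex_stays:
  assumes "v \<in> limit_vertices" "v \<in> set (P k)" "k \<le> n" shows "v \<in> set (P n)"
proof -
  obtain m where "{n. v \<in> set (P n)} = {m..}"
    using assms(1) unfolding limit_vertices_def by blast
  with assms(2,3) show ?thesis by (metis atLeast_iff le_trans mem_Collect_eq)
qed

lemma limit_vertex_eventually_in_path:
  assumes "v \<in> limit_vertices" shows "\<forall>\<^sub>F n in sequentially. v \<in> set (P n)"
proof -
  obtain m where "{n. v \<in> set (P n)} = {m..}"
    using assms unfolding limit_vertices_def by blast
  then show ?thesis unfolding eventually_sequentially by blast
qed

lemma finite_limit_vertices_in_path:
  assumes "finite F" "F \<subseteq> limit_vertices" obtains j where "F \<subseteq> set (P j)"
proof -
  have "\<forall>\<^sub>F n in sequentially. \<forall>v\<in>F. v \<in> set (P n)"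
    using assms(1) by (rule eventually_ball_finite)
      (use assms(2) limit_vertex_eventually_in_path in blast)
  then show thesis
    using that eventually_happens'[OF sequentially_bot] by blast
qed

lemma first_limit_vertex: "x \<in> limit_vertices" and last_limit_vertex: "y \<in> limit_vertices"
  unfolding limit_vertices_def using first_in_path last_in_path by (auto intro: exI[of _ 0])

lemma shared_vertex_is_limit_vertex:
  assumes "v \<in> set (P n)" "v \<in> set (P m)" "n \<noteq> m" shows "v \<in> limit_vertices"
proof -
  define j where "j = (LEAST k. v \<in> set (P k))"
  have first: "v \<in> set (P j)" and least: "\<And>k. v \<in> set (P k) \<Longrightarrow> j \<le> k"
    unfolding j_def using assms(1) by (auto intro: LeastI Least_le)
  obtain i where "j < i" "v \<in> set (P i)"
    using assms least[OF assms(1)] least[OF assms(2)] by (metis le_neq_implies_less)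
  then have "v \<in> set (P k)" if "j < k" for k
    using mem_stable[OF _ that first] by blast
  then have "{k. v \<in> set (P k)} = {j..}"
    using first least by (force simp: le_less)
  then show ?thesis unfolding limit_vertices_def by blast
qed

lemma limit_order_iff_path_le:
  assumes "u \<in> limit_vertices" "w \<in> limit_vertices" "u \<in> set (P j)" "w \<in> set (P j)" "j < n"
  shows "(u, w) \<in> limit_order \<longleftrightarrow> path_le (P n) u w"
proof -
  have "(\<forall>\<^sub>F m in sequentially. path_le (P m) u w) \<longleftrightarrow> path_le (P n) u w"
  proof
    assume "\<forall>\<^sub>F m in sequentially. path_le (P m) u w"
    then obtain N where "\<And>m. N \<le> m \<Longrightarrow> path_le (P m) u w"
      unfolding eventually_sequentially by blast
    then have "path_le (P (max N n)) u w" by simp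
    then show "path_le (P n) u w"
      using path_le_stable[of j "max N n" n u w] assms(3-5) by simp
  next
    assume "path_le (P n) u w"
    then have "path_le (P m) u w" if "Suc j \<le> m" for m
      using path_le_stable[of j m n] assms(3-5) that by auto
    then show "\<forall>\<^sub>F m in sequentially. path_le (P m) u w"
      unfolding eventually_sequentially by blast
  qed
  with assms(1,2) show ?thesis unfolding limit_order_def by blast
qed

lemma limit_order_on_common_path:
  assumes "u \<in> limit_vertices" "w \<in> limit_vertices" "u \<in> set (P j)" "w \<in> set (P j)"
  shows "(u, w) \<in> limit_order \<longleftrightarrow> path_le (P (Suc j)) u w"
  using limit_order_iff_path_le[OF assms] by simp

lemma linear_order_on_limit_order: "linear_order_on limit_vertices limit_order"
proof -
  have field: "limit_order \<subseteq> limit_vertices \<times> limit_vertices"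
    unfolding limit_order_def by blast
  have "refl_on limit_vertices limit_order"
  proof (rule refl_onI)
    fix u assume u: "u \<in> limit_vertices"
    then obtain j where "u \<in> set (P j)"
      using finite_limit_vertices_in_path[of "{u}"] by auto
    moreover from this have "path_le (P (Suc j)) u u"
      using limit_vertex_stays[OF u, of j "Suc j"] by (simp add: path_le_refl)
    ultimately show "(u, u) \<in> limit_order"
      using limit_order_on_common_path[OF u u] by simp
  qed
  moreover have "trans limit_order"
  proof (rule transI)
    fix u v w assume uv: "(u, v) \<in> limit_order" and vw: "(v, w) \<in> limit_order"
    then have L: "u \<in> limit_vertices" "v \<in> limit_vertices" "w \<in> limit_vertices"
      using field by auto
    then obtain j where j: "u \<in> set (P j)" "v \<in> set (P j)" "w \<in> set (P j)"
      using finite_limit_vertices_in_path[of "{u, v, w}"] by auto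
    have "path_le (P (Suc j)) u v" "path_le (P (Suc j)) v w"
      using uv vw limit_order_on_common_path[OF L(1,2) j(1,2)]
        limit_order_on_common_path[OF L(2,3) j(2,3)] by simp_all
    then have "path_le (P (Suc j)) u w" by (rule path_le_trans[OF distinct_path])
    then show "(u, w) \<in> limit_order"
      using limit_order_on_common_path[OF L(1,3) j(1,3)] by simp
  qed
  moreover have "antisym limit_order"
  proof (rule antisymI)
    fix u w assume uw: "(u, w) \<in> limit_order" and wu: "(w, u) \<in> limit_order"
    then have L: "u \<in> limit_vertices" "w \<in> limit_vertices"
      using field by auto
    then obtain j where j: "u \<in> set (P j)" "w \<in> set (P j)"
      using finite_limit_vertices_in_path[of "{u, w}"] by auto
    have "path_le (P (Suc j)) u w" "path_le (P (Suc j)) w u"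
      using uw wu limit_order_on_common_path[OF L j]
        limit_order_on_common_path[OF L(2,1) j(2,1)] by simp_all
    then show "u = w" by (rule path_le_antisym[OF distinct_path])
  qed
  moreover have "total_on limit_vertices limit_order"
  proof (rule total_onI)
    fix u w assume L: "u \<in> limit_vertices" "w \<in> limit_vertices"
    then obtain j where j: "u \<in> set (P j)" "w \<in> set (P j)"
      using finite_limit_vertices_in_path[of "{u, w}"] by auto
    then have "u \<in> set (P (Suc j))" "w \<in> set (P (Suc j))"
      using limit_vertex_stays[OF L(1) j(1)] limit_vertex_stays[OF L(2) j(2)] by simp_all
    then have "path_le (P (Suc j)) u w \<or> path_le (P (Suc j)) w u"
      by (rule path_le_total)
    then show "(u, w) \<in> limit_order \<or> (w, u) \<in> limit_order"
      using limit_order_on_common_path[OF L j]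
        limit_order_on_common_path[OF L(2,1) j(2,1)] by simp
  qed
  ultimately show ?thesis
    using field unfolding linear_order_on_def partial_order_on_def preorder_on_def by blast
qed

lemma first_least: "v \<in> limit_vertices \<Longrightarrow> (x, v) \<in> limit_order"
  and last_greatest: "v \<in> limit_vertices \<Longrightarrow> (v, y) \<in> limit_order"
proof -
  assume v: "v \<in> limit_vertices"
  then obtain j where j: "v \<in> set (P j)"
    using finite_limit_vertices_in_path[of "{v}"] by auto
  then have "v \<in> set (P (Suc j))"
    using limit_vertex_stays[OF v, of j "Suc j"] by simp
  then have "path_le (P (Suc j)) x v" "path_le (P (Suc j)) v y"
    using path_le_hd[of v "P (Suc j)"] path_le_last[of v "P (Suc j)"] paths[of "Suc j"]
    unfolding is_path_def by simp_all
  then show "(x, v) \<in> limit_order" "(v, y) \<in> limit_order"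
    using limit_order_on_common_path[OF first_limit_vertex v first_in_path j]
      limit_order_on_common_path[OF v last_limit_vertex j last_in_path] by simp_all
qed

lemma limit_order_agrees_with_later_paths:
  assumes u: "u \<in> limit_vertices" "u \<in> set (P a)" "a < n"
    and w: "w \<in> limit_vertices" "w \<in> set (P b)" "b < n"
  shows "path_le (P n) u w \<longleftrightarrow> (u, w) \<in> limit_order"
proof -
  have "u \<in> set (P (max a b))" "w \<in> set (P (max a b))"
    using limit_vertex_stays[OF u(1,2)] limit_vertex_stays[OF w(1,2)] by simp_all
  with u w show ?thesis
    using limit_order_iff_path_le[of u w "max a b" n] by simp
qed

lemma countable_limit_vertices: "countable limit_vertices"
proof (rule countable_subset)
  show "limit_vertices \<subseteq> (\<Union>n. set (P n))"
    unfolding limit_vertices_def by fastforce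
qed (simp add: countable_finite)

lemma limit_vertices_subset: "limit_vertices \<subseteq> V"
  using paths unfolding limit_vertices_def is_path_def by fastforce

theorem grain_line:
  assumes "\<And>n m. n \<noteq> m \<Longrightarrow> edge_disjoint (P n) (P m)"
  shows "grain_line V E x y limit_vertices limit_order P"
  unfolding grain_line_def
proof (intro conjI allI ballI impI)
  show "limit_vertices = {v. \<exists>m. {n. v \<in> set (P n)} = {m..}}"
    by (fact limit_vertices_def)
next
  fix n u w
  assume "u \<in> limit_vertices \<inter> (\<Union>k<n. set (P k))" "w \<in> limit_vertices \<inter> (\<Union>k<n. set (P k))"
  then show "path_le (P n) u w \<longleftrightarrow> (u, w) \<in> limit_order"
    using limit_order_agrees_with_later_paths by blast
next
  fix n v m assume "v \<in> set (P n) \<and> v \<notin> limit_vertices" "m \<noteq> n"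
  then show "v \<notin> set (P m)"
    using shared_vertex_is_limit_vertex by blast
qed (use assms paths limit_vertices_subset countable_limit_vertices linear_order_on_limit_order
      first_limit_vertex last_limit_vertex first_least last_greatest in simp_all)

end

lemma grain_line_if_infinite_edge_disjoint_paths:
  assumes "infinite S" and paths: "\<forall>p\<in>S. is_path V E x y p"
    and disjoint: "\<forall>p\<in>S. \<forall>q\<in>S. p \<noteq> q \<longrightarrow> edge_disjoint p q"
  shows "\<exists>L R P. grain_line V E x y L R P"
proof -
  obtain P :: "nat \<Rightarrow> 'a list" where "inj P" "range P \<subseteq> S"
    and stable: "\<And>j n n'. j < n \<Longrightarrow> j < n' \<Longrightarrow> path_trace (P j) (P n) = path_trace (P j) (P n')"
    using \<open>infinite S\<close> finite_range_path_trace
    by (rule stabilizing_sequence[where f = path_trace]) blast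
  interpret trace_stable_paths V E x y P
    using stable paths \<open>range P \<subseteq> S\<close> by unfold_locales blast+
  have "grain_line V E x y limit_vertices limit_order P"
  proof (rule grain_line)
    fix n m :: nat assume "n \<noteq> m"
    then have "P n \<noteq> P m" using \<open>inj P\<close> by (simp add: inj_eq)
    then show "edge_disjoint (P n) (P m)" using disjoint \<open>range P \<subseteq> S\<close> by blast
  qed
  then show ?thesis by blast
qed

theorem theorem5p4:
  fixes V :: "'a set" and E :: "'a \<Rightarrow> 'a \<Rightarrow> bool" and x y :: 'a
  assumes "simple_graph V E" and "x \<in> V" and "y \<in> V" and "x \<noteq> y"
  shows "(\<exists>L R P. grain_line V E x y L R P) \<longleftrightarrow>
         (\<exists>S. infinite S \<and> (\<forall>p\<in>S. is_path V E x y p) \<and>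
              (\<forall>p\<in>S. \<forall>q\<in>S. p \<noteq> q \<longrightarrow> edge_disjoint p q))"
proof
  assume "\<exists>L R P. grain_line V E x y L R P"
  then obtain L R P where "grain_line V E x y L R P" by blast
  from infinite_edge_disjoint_paths_if_grain_line[OF this \<open>x \<noteq> y\<close>]
  show "\<exists>S. infinite S \<and> (\<forall>p\<in>S. is_path V E x y p) \<and>
      (\<forall>p\<in>S. \<forall>q\<in>S. p \<noteq> q \<longrightarrow> edge_disjoint p q)"
    by (intro exI[of _ "range P"])
next
  assume "\<exists>S. infinite S \<and> (\<forall>p\<in>S. is_path V E x y p) \<and>
      (\<forall>p\<in>S. \<forall>q\<in>S. p \<noteq> q \<longrightarrow> edge_disjoint p q)"
  then obtain S where "infinite S" "\<forall>p\<in>S. is_path V E x y p"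
    "\<forall>p\<in>S. \<forall>q\<in>S. p \<noteq> q \<longrightarrow> edge_disjoint p q"
    by blast
  then show "\<exists>L R P. grain_line V E x y L R P"
    by (rule grain_line_if_infinite_edge_disjoint_paths)
qed

end
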